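(* Let $X$ be convex and let $f$ be $\alpha$-robustly quasiconvex for some $\alpha>0$, with $X\subset\operatorname{dom}f$. If $X^\infty\cap\mathcal{K}_q(f)=\{0\}$, then the optimal value function $\mu$ is continuous at $0$.
   Context: Standing assumptions: $f:\mathbb{R}^n\to\mathbb{R}\cup\{\pm\infty\}$ is proper (never $-\infty$ and finite at some point) and lower semicontinuous; $X\subset\mathbb{R}^n$ is a nonempty closed set with $\operatorname{dom}f\cap X$ unbounded. $f$ is $\alpha$-robustly quasiconvex ($\alpha\ge0$) if $x\mapsto f(x)+\langle u,x\rangle$ is quasiconvex for every $u$ in the open ball $\mathbb{B}_\alpha$ of radius $\alpha$ about $0$ (quasiconvex: $g(\lambda x+(1-\lambda)y)\le\max\{g(x),g(y)\}$ for $x,y\in\operatorname{dom}g$, $\lambda\in[0,1]$). $X^\infty=\{u:\exists t_k\to+\infty,\ \exists x_k\in X,\ x_k/t_k\to u\}$. $f^\infty_q(u)=\sup_{x\in\operatorname{dom}f}\sup_{t>0}\frac{f(x+tu)-f(x)}{t}$, $\mathcal{K}_q(f)=\{d: f^\infty_q(d)\le0\}$. $f_u(x)=f(x)-\langle u,x\rangle$ and $\mu(u)=\inf_{x\in X}f_u(x)$; continuity of $\mu$ at $0$ means $\lim_{u\to0}\mu(u)=\mu(0)$. *)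

theory Defs
  imports "HOL-Analysis.Analysis" "HOL-Library.Extended_Real"
begin

definition edom :: "('a \<Rightarrow> ereal) \<Rightarrow> 'a set" where
  "edom f = {x. f x < \<infinity>}"

definition proper_fun :: "('a \<Rightarrow> ereal) \<Rightarrow> bool" where
  "proper_fun f \<longleftrightarrow> (\<forall>x. f x \<noteq> -\<infinity>) \<and> (\<exists>x. f x < \<infinity>)"

definition lsc_fun :: "('a::topological_space \<Rightarrow> ereal) \<Rightarrow> bool" where
  "lsc_fun f \<longleftrightarrow> (\<forall>x c. c < f x \<longrightarrow> (\<forall>\<^sub>F y in at x. c < f y))"

definition quasiconvex_fun :: "('a::real_vector \<Rightarrow> ereal) \<Rightarrow> bool" where
  "quasiconvex_fun g \<longleftrightarrow>
     (\<forall>x\<in>edom g. \<forall>y\<in>edom g. \<forall>l::real. 0 \<le> l \<and> l \<le> 1 \<longrightarrow>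
        g (l *\<^sub>R x + (1 - l) *\<^sub>R y) \<le> max (g x) (g y))"

definition robustly_quasiconvex :: "real \<Rightarrow> ('a::real_inner \<Rightarrow> ereal) \<Rightarrow> bool" where
  "robustly_quasiconvex \<alpha> f \<longleftrightarrow>
     (\<forall>u. u \<in> ball 0 \<alpha> \<longrightarrow> quasiconvex_fun (\<lambda>x. f x + ereal (inner u x)))"

definition asymptotic_cone :: "'a::real_normed_vector set \<Rightarrow> 'a set" where
  "asymptotic_cone X = {u. \<exists>t::nat \<Rightarrow> real. \<exists>x::nat \<Rightarrow> 'a.
      filterlim t at_top sequentially \<and> (\<forall>k. x k \<in> X) \<and>
      ((\<lambda>k. x k /\<^sub>R t k) \<longlonglongrightarrow> u)}"

definition q_asymptotic :: "('a::real_vector \<Rightarrow> ereal) \<Rightarrow> 'a \<Rightarrow> ereal" where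
  "q_asymptotic f u =
     (SUP x\<in>edom f. SUP t\<in>{0<..}. (f (x + t *\<^sub>R u) - f x) / ereal t)"

definition Kq :: "('a::real_vector \<Rightarrow> ereal) \<Rightarrow> 'a set" where
  "Kq f = {d. q_asymptotic f d \<le> 0}"

definition opt_value :: "('a::real_inner \<Rightarrow> ereal) \<Rightarrow> 'a set \<Rightarrow> 'a \<Rightarrow> ereal" where
  "opt_value f X u = (INF x\<in>X. f x - ereal (inner u x))"

end

theory Submission
  imports Defs
begin

text \<open>The optimal value \<open>\<mu>\<close> is an infimum of functions that are continuous in \<open>u\<close>, so it is
upper semicontinuous. If it were not lower semicontinuous at \<open>0\<close>, there would be \<open>u\<^sub>n \<rightarrow> 0\<close>
and points \<open>x\<^sub>n \<in> X\<close> with \<open>f x\<^sub>n - \<langle>u\<^sub>n, x\<^sub>n\<rangle> < c < \<mu> 0\<close>; these must escape to infinity,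
and a limit direction \<open>d\<close> of \<open>x\<^sub>n / \<bar>x\<^sub>n\<bar>\<close> is a unit vector of \<open>X\<^sup>\<infinity>\<close>. Tilting \<open>f\<close> by \<open>-\<beta> d\<close>
for small \<open>\<beta> > 0\<close> keeps it quasiconvex and makes the far points \<open>x\<^sub>n\<close> lower than any fixed \<open>x\<close>,
so quasiconvexity and lower semicontinuity give \<open>f (x + t d) \<le> f x + \<beta> t\<close>. Letting
\<open>\<beta> \<rightarrow> 0\<close> shows \<open>d \<in> K\<^sub>q(f)\<close>, contradicting \<open>X\<^sup>\<infinity> \<inter> K\<^sub>q(f) = {0}\<close>.\<close>

lemma proper_fun_edom_real:
  assumes "proper_fun f" and "x \<in> edom f"
  obtains r where "f x = ereal r"
  using assms unfolding proper_fun_def edom_def by (cases "f x") auto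

lemma Kq_memberI:
  fixes f :: "'a::real_vector \<Rightarrow> ereal"
  assumes "proper_fun f"
    and descent: "\<And>x t. x \<in> edom f \<Longrightarrow> 0 < t \<Longrightarrow> f (x + t *\<^sub>R d) \<le> f x"
  shows "d \<in> Kq f"
  unfolding Kq_def q_asymptotic_def
proof (intro CollectI SUP_least)
  fix x and t :: real assume x: "x \<in> edom f" and "t \<in> {0<..}"
  hence t: "0 < t" by simp
  obtain r where r: "f x = ereal r" using proper_fun_edom_real[OF \<open>proper_fun f\<close> x] .
  have "f (x + t *\<^sub>R d) \<noteq> -\<infinity>" using \<open>proper_fun f\<close> unfolding proper_fun_def by blast
  with descent[OF x t] show "(f (x + t *\<^sub>R d) - f x) / ereal t \<le> 0"
    using t r by (cases "f (x + t *\<^sub>R d)") (auto simp: divide_nonpos_pos)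
qed

lemma lsc_fun_le_limit:
  assumes "lsc_fun f" and "p \<longlonglongrightarrow> z" and "g \<longlonglongrightarrow> L"
    and "\<forall>\<^sub>F n in sequentially. f (p n) \<le> ereal (g n)"
  shows "f z \<le> ereal L"
proof (rule ccontr)
  assume "\<not> f z \<le> ereal L"
  hence "ereal L < f z" by simp
  then obtain c where Lc: "L < c" and cz: "ereal c < f z"
    using ereal_dense2 by fastforce
  have "\<forall>\<^sub>F y in at z. c < f y" using assms(1) cz unfolding lsc_fun_def by blast
  hence "\<forall>\<^sub>F y in nhds z. y \<noteq> z \<longrightarrow> c < f y" by (simp add: eventually_at_filter)
  hence "\<forall>\<^sub>F y in nhds z. c < f y" by eventually_elim (use cz in auto)
  hence "\<forall>\<^sub>F n in sequentially. c < f (p n)"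
    using assms(2) by (rule eventually_compose_filterlim)
  moreover have "\<forall>\<^sub>F n in sequentially. g n < c" using assms(3) Lc by (rule order_tendstoD)
  ultimately have "\<forall>\<^sub>F n in sequentially. False" using assms(4)
  proof eventually_elim
    case (elim n)
    hence "ereal c < ereal (g n)" by (meson less_le_trans)
    thus False using elim by simp
  qed
  thus False by simp
qed

lemma eventually_tilted_le:
  fixes y v :: "nat \<Rightarrow> 'a::real_inner"
  assumes "v \<longlonglongrightarrow> 0" and ny: "filterlim (\<lambda>n. norm (y n)) at_top sequentially"
    and "(\<lambda>n. y n /\<^sub>R norm (y n)) \<longlonglongrightarrow> d" and "norm d = 1" and "0 < \<beta>"
  shows "\<forall>\<^sub>F n in sequentially. c + inner (v n) (y n) - \<beta> * inner d (y n) \<le> K"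
proof -
  define Q where "Q n = (c - K) / norm (y n) + inner (v n) (y n /\<^sub>R norm (y n))
    - \<beta> * inner d (y n /\<^sub>R norm (y n))" for n
  have "Q \<longlonglongrightarrow> 0 + inner 0 d - \<beta> * inner d d"
    unfolding Q_def using assms(1,3)
    by (intro tendsto_intros tendsto_divide_0[OF tendsto_const
          filterlim_at_top_imp_at_infinity[OF ny]])
  moreover have "inner d d = 1" using \<open>norm d = 1\<close> by (simp flip: power2_norm_eq_inner)
  ultimately have "Q \<longlonglongrightarrow> - \<beta>" by simp
  hence "\<forall>\<^sub>F n in sequentially. Q n < 0" using \<open>0 < \<beta>\<close> by (intro order_tendstoD) auto
  moreover have "\<forall>\<^sub>F n in sequentially. 0 < norm (y n)" using ny unfolding filterlim_at_top_dense by blast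
  ultimately show ?thesis
  proof eventually_elim
    case (elim n)
    have "Q n * norm (y n) = c - K + inner (v n) (y n) - \<beta> * inner d (y n)"
      using elim(2) by (simp add: Q_def field_simps)
    moreover have "Q n * norm (y n) < 0" using elim by (simp add: mult_neg_pos)
    ultimately show ?case by linarith
  qed
qed

lemma robustly_quasiconvex_ray_le:
  fixes f :: "'a::real_inner \<Rightarrow> ereal" and y v :: "nat \<Rightarrow> 'a"
  assumes lsc: "lsc_fun f" and rq: "robustly_quasiconvex \<alpha> f"
    and yc: "\<And>n. f (y n) \<le> ereal (c + inner (v n) (y n))"
    and v: "v \<longlonglongrightarrow> 0"
    and ny: "filterlim (\<lambda>n. norm (y n)) at_top sequentially"
    and d: "(\<lambda>n. y n /\<^sub>R norm (y n)) \<longlonglongrightarrow> d" and "norm d = 1"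
    and fx: "f x = ereal r" and "0 < t" and "0 < \<beta>" and "\<beta> < \<alpha>"
  shows "f (x + t *\<^sub>R d) \<le> ereal (r + \<beta> * t)"
proof -
  let ?g = "\<lambda>z. f z + ereal (inner (- \<beta> *\<^sub>R d) z)"
  have "- \<beta> *\<^sub>R d \<in> ball 0 \<alpha>" using \<open>0 < \<beta>\<close> \<open>\<beta> < \<alpha>\<close> \<open>norm d = 1\<close> by simp
  hence qc: "quasiconvex_fun ?g" using rq unfolding robustly_quasiconvex_def by blast
  have dd: "inner d d = 1" using \<open>norm d = 1\<close> by (simp flip: power2_norm_eq_inner)
  define l where "l n = t / norm (y n)" for n
  define p where "p n = l n *\<^sub>R y n + (1 - l n) *\<^sub>R x" for n
  have "l \<longlonglongrightarrow> 0" unfolding l_def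
    by (rule tendsto_divide_0[OF tendsto_const filterlim_at_top_imp_at_infinity[OF ny]])
  hence "(\<lambda>n. t *\<^sub>R (y n /\<^sub>R norm (y n)) + x - l n *\<^sub>R x) \<longlonglongrightarrow> t *\<^sub>R d + x - 0 *\<^sub>R x"
    using d by (intro tendsto_intros)
  moreover have "p = (\<lambda>n. t *\<^sub>R (y n /\<^sub>R norm (y n)) + x - l n *\<^sub>R x)"
    by (simp add: fun_eq_iff p_def l_def algebra_simps divide_inverse)
  ultimately have p: "p \<longlonglongrightarrow> x + t *\<^sub>R d" by (simp add: add.commute)
  have "\<forall>\<^sub>F n in sequentially. t \<le> norm (y n)" using ny by (simp add: filterlim_at_top)
  moreover have "\<forall>\<^sub>F n in sequentially. c + inner (v n) (y n) - \<beta> * inner d (y n) \<le> r - \<beta> * inner d x"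
    using eventually_tilted_le[OF v ny d \<open>norm d = 1\<close> \<open>0 < \<beta>\<close>] .
  ultimately have "\<forall>\<^sub>F n in sequentially. f (p n) \<le> ereal (r - \<beta> * inner d x + \<beta> * inner d (p n))"
  proof eventually_elim
    case (elim n)
    have "0 \<le> l n" "l n \<le> 1" using elim(1) \<open>0 < t\<close> by (auto simp: l_def divide_le_eq_1)
    moreover have "y n \<in> edom ?g" "x \<in> edom ?g"
      using yc[of n] fx by (auto simp: edom_def le_less_trans)
    ultimately have "?g (p n) \<le> max (?g (y n)) (?g x)"
      using qc unfolding quasiconvex_fun_def p_def by blast
    moreover have "?g (y n) \<le> ?g x"
      using add_right_mono[OF yc[of n], of "ereal (inner (- \<beta> *\<^sub>R d) (y n))"] elim(2) fx
      by (simp add: order_trans)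
    ultimately have "?g (p n) \<le> ereal (r - \<beta> * inner d x)" by (simp add: fx)
    thus ?case by (cases "f (p n)") auto
  qed
  moreover have "(\<lambda>n. r - \<beta> * inner d x + \<beta> * inner d (p n)) \<longlonglongrightarrow> r - \<beta> * inner d x + \<beta> * inner d (x + t *\<^sub>R d)"
    by (intro tendsto_intros p)
  ultimately have "f (x + t *\<^sub>R d) \<le> ereal (r - \<beta> * inner d x + \<beta> * inner d (x + t *\<^sub>R d))"
    using lsc_fun_le_limit[OF lsc p] by blast
  thus ?thesis by (simp add: dd algebra_simps)
qed

lemma asymptotic_direction_in_Kq:
  fixes f :: "'a::real_inner \<Rightarrow> ereal" and y v :: "nat \<Rightarrow> 'a"
  assumes "proper_fun f" and "lsc_fun f" and "0 < \<alpha>" and "robustly_quasiconvex \<alpha> f"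
    and "\<And>n. f (y n) \<le> ereal (c + inner (v n) (y n))"
    and "v \<longlonglongrightarrow> 0"
    and "filterlim (\<lambda>n. norm (y n)) at_top sequentially"
    and "(\<lambda>n. y n /\<^sub>R norm (y n)) \<longlonglongrightarrow> d" and "norm d = 1"
  shows "d \<in> Kq f"
proof (rule Kq_memberI[OF \<open>proper_fun f\<close>])
  fix x and t :: real assume "x \<in> edom f" and "0 < t"
  then obtain r where r: "f x = ereal r" using proper_fun_edom_real[OF \<open>proper_fun f\<close>] by blast
  show "f (x + t *\<^sub>R d) \<le> f x"
    unfolding r
  proof (rule ereal_le_epsilon2)
    fix e :: real assume "0 < e"
    define \<beta> where "\<beta> = min (\<alpha> / 2) (e / t)"
    have "0 < \<beta>" "\<beta> < \<alpha>" using \<open>0 < \<alpha>\<close> \<open>0 < e\<close> \<open>0 < t\<close> by (auto simp: \<beta>_def)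
    have "\<beta> * t \<le> e" using \<open>0 < t\<close> by (simp add: \<beta>_def min_def field_simps)
    hence "ereal (r + \<beta> * t) \<le> ereal r + ereal e" by simp
    moreover have "f (x + t *\<^sub>R d) \<le> ereal (r + \<beta> * t)"
      using robustly_quasiconvex_ray_le[OF assms(2,4-9) r \<open>0 < t\<close> \<open>0 < \<beta>\<close> \<open>\<beta> < \<alpha>\<close>] .
    ultimately show "f (x + t *\<^sub>R d) \<le> ereal r + ereal e" by (rule order_trans[rotated])
  qed
qed

lemma opt_value_upper_eventually:
  assumes "proper_fun f" and "opt_value f X u0 < b"
  shows "\<forall>\<^sub>F u in at u0. opt_value f X u < b"
proof -
  obtain x where x: "x \<in> X" and "f x - ereal (inner u0 x) < b"
    using assms(2) unfolding opt_value_def INF_less_iff by blast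
  moreover obtain r where r: "f x = ereal r"
    using assms(1) calculation(2) unfolding proper_fun_def by (cases "f x") auto
  ultimately have "ereal (r - inner u0 x) < b" by simp
  moreover have "((\<lambda>u. ereal (r - inner u x)) \<longlongrightarrow> ereal (r - inner u0 x)) (at u0)"
    unfolding lim_ereal by (intro tendsto_intros)
  ultimately have "\<forall>\<^sub>F u in at u0. ereal (r - inner u x) < b"
    using order_tendstoD(2) by blast
  thus ?thesis
  proof eventually_elim
    case (elim u)
    have "opt_value f X u \<le> f x - ereal (inner u x)"
      unfolding opt_value_def using x by (rule INF_lower)
    thus ?case using elim r by simp
  qed
qed

lemma not_eventually_at_sequence:
  fixes a :: "'a::metric_space"
  assumes "\<not> eventually P (at a)"
  obtains u where "u \<longlonglongrightarrow> a" and "\<And>n. \<not> P (u n)"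
proof -
  have "\<forall>e>0. \<exists>x. dist x a < e \<and> \<not> P x" using assms unfolding eventually_at by auto
  hence "\<exists>x. dist x a < inverse (Suc n) \<and> \<not> P x" for n by simp
  then obtain u where u: "\<And>n. dist (u n) a < inverse (Suc n)" and nP: "\<And>n. \<not> P (u n)" by metis
  have "(\<lambda>n. dist (u n) a) \<longlonglongrightarrow> 0"
  proof (rule tendsto_sandwich[OF _ _ tendsto_const LIMSEQ_inverse_real_of_nat])
    show "\<forall>\<^sub>F n in sequentially. dist (u n) a \<le> inverse (real (Suc n))"
      using u by (simp add: less_imp_le)
  qed simp
  with nP show thesis using that tendsto_dist_iff by blast
qed

lemma unbounded_sequence_direction:
  fixes x :: "nat \<Rightarrow> 'a::{real_normed_vector, heine_borel}"
  assumes "filterlim (\<lambda>n. norm (x n)) at_top sequentially"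
  obtains r d where "strict_mono r" and "norm d = 1"
    and "(\<lambda>n. x (r n) /\<^sub>R norm (x (r n))) \<longlonglongrightarrow> d"
proof -
  define w where "w n = x n /\<^sub>R norm (x n)" for n
  have "w n \<in> cball 0 1" for n by (cases "x n = 0") (simp_all add: w_def)
  then obtain d r where r: "strict_mono r" and wr: "(w \<circ> r) \<longlonglongrightarrow> d"
    using compact_imp_seq_compact[OF compact_cball] unfolding seq_compact_def by metis
  have "\<forall>\<^sub>F n in sequentially. 1 \<le> norm (x (r n))"
    using filterlim_compose[OF assms filterlim_subseq[OF r]] unfolding filterlim_at_top by blast
  hence "\<forall>\<^sub>F n in sequentially. norm ((w \<circ> r) n) = 1"
  proof eventually_elim
    case (elim n)
    hence "norm (x (r n)) \<noteq> 0" by linarith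
    thus ?case by (simp add: w_def)
  qed
  hence "(\<lambda>n. norm ((w \<circ> r) n)) \<longlonglongrightarrow> 1" by (rule tendsto_eventually)
  hence "norm d = 1" using tendsto_norm[OF wr] LIMSEQ_unique by blast
  with r wr show thesis using that by (simp add: o_def w_def)
qed

lemma approximate_minimizers_unbounded:
  fixes x u :: "nat \<Rightarrow> 'a::real_inner"
  assumes "u \<longlonglongrightarrow> 0" and "\<And>n. x n \<in> X"
    and xc: "\<And>n. f (x n) \<le> ereal (c + inner (u n) (x n))"
    and "ereal c < opt_value f X 0"
  shows "filterlim (\<lambda>n. norm (x n)) at_top sequentially"
proof -
  obtain m where "c < m" and m: "ereal m < opt_value f X 0"
    using ereal_dense2[OF assms(4)] by force
  have bound: "(m - c) / norm (u n) \<le> norm (x n) \<and> 0 < norm (u n)" for n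
  proof -
    have "opt_value f X 0 \<le> f (x n)"
      unfolding opt_value_def using assms(2) by (simp add: INF_lower)
    hence "ereal m < ereal (c + inner (u n) (x n))" using m xc[of n] by (meson less_le_trans)
    hence "m < c + inner (u n) (x n)" by simp
    also have "\<dots> \<le> c + norm (u n) * norm (x n)" by (simp add: norm_cauchy_schwarz)
    finally have "m - c < norm (u n) * norm (x n)" by simp
    moreover have "0 < norm (u n)"
    proof (rule ccontr)
      assume "\<not> 0 < norm (u n)"
      thus False using \<open>m - c < norm (u n) * norm (x n)\<close> \<open>c < m\<close> by simp
    qed
    ultimately show ?thesis by (simp add: pos_divide_le_eq mult.commute)
  qed
  have "filterlim (\<lambda>n. (m - c) / norm (u n)) at_top sequentially"
    using \<open>c < m\<close> bound
    by (intro LIM_at_top_divide tendsto_const tendsto_norm_zero \<open>u \<longlonglongrightarrow> 0\<close>) auto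
  moreover have "\<forall>\<^sub>F n in sequentially. (m - c) / norm (u n) \<le> norm (x n)"
    using bound by (simp add: always_eventually)
  ultimately show ?thesis by (rule filterlim_at_top_mono)
qed

lemma opt_value_lower_eventually:
  fixes f :: "'a::euclidean_space \<Rightarrow> ereal"
  assumes "proper_fun f" and "lsc_fun f" and "0 < \<alpha>" and "robustly_quasiconvex \<alpha> f"
    and cone: "asymptotic_cone X \<inter> Kq f = {0}"
    and "a < opt_value f X 0"
  shows "\<forall>\<^sub>F u in at 0. a < opt_value f X u"
proof (rule ccontr)
  assume "\<not> ?thesis"
  then obtain u where u: "u \<longlonglongrightarrow> 0" and "\<And>n. opt_value f X (u n) \<le> a"
    by (rule not_eventually_at_sequence) (simp add: not_less)
  obtain c where "a < ereal c" and c: "ereal c < opt_value f X 0"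
    using ereal_dense2[OF \<open>a < opt_value f X 0\<close>] by blast
  have "\<exists>x\<in>X. f x - ereal (inner (u n) x) < ereal c" for n
    using \<open>opt_value f X (u n) \<le> a\<close> \<open>a < ereal c\<close>
    unfolding opt_value_def INF_less_iff[symmetric] by (rule le_less_trans)
  then obtain x where x: "\<And>n. x n \<in> X"
    and xlt: "\<And>n. f (x n) - ereal (inner (u n) (x n)) < ereal c"
    by metis
  have xc: "f (x n) \<le> ereal (c + inner (u n) (x n))" for n
    using xlt[of n] by (cases "f (x n)") auto
  have xinf: "filterlim (\<lambda>n. norm (x n)) at_top sequentially"
    using approximate_minimizers_unbounded[OF u x xc c] .
  then obtain r d where r: "strict_mono r" and "norm d = 1"
    and dir: "(\<lambda>n. x (r n) /\<^sub>R norm (x (r n))) \<longlonglongrightarrow> d"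
    by (rule unbounded_sequence_direction)
  have xr: "filterlim (\<lambda>n. norm (x (r n))) at_top sequentially"
    using filterlim_compose[OF xinf filterlim_subseq[OF r]] by (simp add: o_def)
  have "d \<in> asymptotic_cone X"
    unfolding asymptotic_cone_def
    by (intro CollectI exI[of _ "\<lambda>n. norm (x (r n))"] exI[of _ "x \<circ> r"] conjI allI)
       (simp_all add: x xr dir)
  moreover have "d \<in> Kq f"
  proof (rule asymptotic_direction_in_Kq[where y = "\<lambda>n. x (r n)" and v = "\<lambda>n. u (r n)", OF assms(1-4)])
    show "(\<lambda>n. u (r n)) \<longlonglongrightarrow> 0" using LIMSEQ_subseq_LIMSEQ[OF u r] by (simp add: o_def)
  qed (fact xc xr dir \<open>norm d = 1\<close>)+
  ultimately have "d \<in> asymptotic_cone X \<inter> Kq f" by blast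
  hence "d = 0" unfolding cone by simp
  with \<open>norm d = 1\<close> show False by simp
qed

theorem mainTheorem14:
  fixes f :: "'a::euclidean_space \<Rightarrow> ereal" and X :: "'a set" and \<alpha> :: real
  assumes "proper_fun f" and "lsc_fun f"
    and "closed X" and "X \<noteq> {}" and "\<not> bounded (edom f \<inter> X)"
    and "convex X"
    and "\<alpha> > 0" and "robustly_quasiconvex \<alpha> f"
    and "X \<subseteq> edom f"
    and "asymptotic_cone X \<inter> Kq f = {0}"
  shows "(opt_value f X \<longlongrightarrow> opt_value f X 0) (at 0)"
proof (rule order_tendstoI)
  fix b assume "opt_value f X 0 < b"
  with \<open>proper_fun f\<close> show "\<forall>\<^sub>F u in at 0. opt_value f X u < b"
    by (rule opt_value_upper_eventually)
next
  fix a assume "a < opt_value f X 0"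
  with assms(1,2,7,8,10) show "\<forall>\<^sub>F u in at 0. a < opt_value f X u"
    by (rule opt_value_lower_eventually)
qed

end
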